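(* Let $\overline{\mathcal R}(D)$ be defined exactly as $\mathcal R_{Y-X-Z}(D)$ except that the joint distribution is allowed to be of the form $p(x,y,z,u,w)=p(x,y)p(z|x)p(u|y)p(w|x,u,y)$. Then $\overline{\mathcal R}(D)=\mathcal R_{Y-X-Z}(D)$.
   Context: Let $\mathcal X,\mathcal Y,\mathcal Z,\hat{\mathcal X}$ be finite alphabets, $d:\mathcal X\times\hat{\mathcal X}\to[0,\infty)$ a distortion measure, and $(X,Y,Z)\sim p(x,y)p(z|x)$. $\mathcal R_{Y-X-Z}(D)$ is the set of all pairs $(R,R_1)$ with $R_1\ge I(U;Y|Z)$ and $R\ge I(X;W|U,Z)$ for some finite-alphabet random variables $U,W$ with joint distribution $p(x,y,z,u,w)=p(x,y)p(z|x)p(u|y)p(w|x,u)$ and a deterministic function $\hat X(U,W,Z)$ with $\mathbb E\, d(X,\hat X(U,W,Z))\le D$. *)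

theory Defs
  imports "HOL-Probability.Probability"
begin

definition cond_mutual_info :: "('a \<times> 'b \<times> 'c) pmf \<Rightarrow> real" where
  "cond_mutual_info P =
     (\<Sum>(a,b,c)\<in>set_pmf P.
        pmf P (a,b,c) *
        log 2 (pmf P (a,b,c) * pmf (map_pmf (\<lambda>(a,b,c). c) P) c /
               (pmf (map_pmf (\<lambda>(a,b,c). (a,c)) P) (a,c) *
                pmf (map_pmf (\<lambda>(a,b,c). (b,c)) P) (b,c))))"

text \<open>Joint distribution p(x,y)p(z|x)p(u|y)p(w|x,u,y) of (X,Y,Z,U,W).
  Auxiliary alphabets are encoded in nat (with finite support required below).\<close>
definition joint_dist ::
  "('x \<times> 'y) pmf \<Rightarrow> ('x \<Rightarrow> 'z pmf) \<Rightarrow> ('y \<Rightarrow> nat pmf) \<Rightarrow> ('x \<Rightarrow> nat \<Rightarrow> 'y \<Rightarrow> nat pmf)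
    \<Rightarrow> ('x \<times> 'y \<times> 'z \<times> nat \<times> nat) pmf" where
  "joint_dist p q pu pw =
     bind_pmf p (\<lambda>(x,y). bind_pmf (q x) (\<lambda>z. bind_pmf (pu y) (\<lambda>u.
       map_pmf (\<lambda>w. (x,y,z,u,w)) (pw x u y))))"

definition achieves ::
  "('x \<times> 'y) pmf \<Rightarrow> ('x \<Rightarrow> 'z pmf) \<Rightarrow> ('x \<Rightarrow> 'xh \<Rightarrow> real) \<Rightarrow> real
    \<Rightarrow> ('y \<Rightarrow> nat pmf) \<Rightarrow> ('x \<Rightarrow> nat \<Rightarrow> 'y \<Rightarrow> nat pmf) \<Rightarrow> (nat \<Rightarrow> nat \<Rightarrow> 'z \<Rightarrow> 'xh)
    \<Rightarrow> real \<times> real \<Rightarrow> bool" where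
  "achieves p q d D pu pw xhat RR1 =
     (let J = joint_dist p q pu pw in
       finite (\<Union>y. set_pmf (pu y)) \<and>
       finite (\<Union>x. \<Union>u. \<Union>y. set_pmf (pw x u y)) \<and>
       measure_pmf.expectation J (\<lambda>(x,y,z,u,w). d x (xhat u w z)) \<le> D \<and>
       snd RR1 \<ge> cond_mutual_info (map_pmf (\<lambda>(x,y,z,u,w). (u,y,z)) J) \<and>
       fst RR1 \<ge> cond_mutual_info (map_pmf (\<lambda>(x,y,z,u,w). (x,w,(u,z))) J))"

definition region_YXZ ::
  "('x \<times> 'y) pmf \<Rightarrow> ('x \<Rightarrow> 'z pmf) \<Rightarrow> ('x \<Rightarrow> 'xh \<Rightarrow> real) \<Rightarrow> real \<Rightarrow> (real \<times> real) set" where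
  "region_YXZ p q d D =
     {RR1. \<exists>pu (pw :: 'x \<Rightarrow> nat \<Rightarrow> nat pmf) xhat.
              achieves p q d D pu (\<lambda>x u y. pw x u) xhat RR1}"

definition region_bar ::
  "('x \<times> 'y) pmf \<Rightarrow> ('x \<Rightarrow> 'z pmf) \<Rightarrow> ('x \<Rightarrow> 'xh \<Rightarrow> real) \<Rightarrow> real \<Rightarrow> (real \<times> real) set" where
  "region_bar p q d D = {RR1. \<exists>pu pw xhat. achieves p q d D pu pw xhat RR1}"

end

theory Submission imports Defs begin

text \<open>Given a test channel p(w|x,u,y), average it over Y given (X,U):
  p'(w|x,u) = \<Sum>y. p(y|x,u) p(w|x,u,y).  Since Z depends on (X,Y,U) only through X,
  the joint law of (X,Z,U,W) is unchanged, and the law of (U,Y,Z) never involved W.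
  Distortion and both conditional mutual informations are functionals of these two
  marginals, so every pair achieved with p(w|x,u,y) is achieved with p'(w|x,u).\<close>

lemma bind_cond_pmf_fst: "bind_pmf (map_pmf fst A) (\<lambda>a. cond_pmf A {t. fst t = a}) = A"
  by (rule bind_cond_pmf_cancel) (auto simp: measure_map_pmf vimage_def)

text \<open>Off the support of the first marginal of A the value is an arbitrary point mass at c0.\<close>
definition averaged_kernel :: "('a \<times> 'b) pmf \<Rightarrow> ('a \<Rightarrow> 'b \<Rightarrow> 'c pmf) \<Rightarrow> 'c \<Rightarrow> 'a \<Rightarrow> 'c pmf" where
  "averaged_kernel A P c0 a =
     (if a \<in> set_pmf (map_pmf fst A)
      then bind_pmf (cond_pmf A {t. fst t = a}) (\<lambda>(a', b). P a' b) else return_pmf c0)"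

lemma bind_averaged_kernel:
  "bind_pmf A (\<lambda>(a, b). bind_pmf (P a b) (k a)) =
   bind_pmf A (\<lambda>(a, b). bind_pmf (averaged_kernel A P c0 a) (k a))"
proof -
  have "bind_pmf A (\<lambda>(a, b). bind_pmf (P a b) (k a)) =
     bind_pmf (map_pmf fst A)
       (\<lambda>a. bind_pmf (cond_pmf A {t. fst t = a}) (\<lambda>(a, b). bind_pmf (P a b) (k a)))"
    by (subst (1) bind_cond_pmf_fst[symmetric]) (simp add: bind_assoc_pmf)
  also have "\<dots> = bind_pmf (map_pmf fst A) (\<lambda>a. bind_pmf (averaged_kernel A P c0 a) (k a))"
  proof (rule bind_pmf_cong[OF refl])
    fix a assume a: "a \<in> set_pmf (map_pmf fst A)"
    then have ne: "set_pmf A \<inter> {t. fst t = a} \<noteq> {}" by auto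
    show "bind_pmf (cond_pmf A {t. fst t = a}) (\<lambda>(a, b). bind_pmf (P a b) (k a)) =
          bind_pmf (averaged_kernel A P c0 a) (k a)"
      unfolding averaged_kernel_def using a
      by (simp add: bind_assoc_pmf)
         (rule bind_pmf_cong[OF refl], auto simp: set_cond_pmf[OF ne])
  qed
  also have "\<dots> = bind_pmf A (\<lambda>(a, b). bind_pmf (averaged_kernel A P c0 a) (k a))"
    by (simp add: bind_map_pmf case_prod_unfold)
  finally show ?thesis .
qed

lemma set_averaged_kernel_subset:
  "set_pmf (averaged_kernel A P c0 a) \<subseteq> insert c0 (\<Union>a. \<Union>b. set_pmf (P a b))"
  unfolding averaged_kernel_def by auto

definition xu_y_pmf :: "('x \<times> 'y) pmf \<Rightarrow> ('y \<Rightarrow> nat pmf) \<Rightarrow> (('x \<times> nat) \<times> 'y) pmf" where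
  "xu_y_pmf p pu = bind_pmf p (\<lambda>(x, y). map_pmf (\<lambda>u. ((x, u), y)) (pu y))"

lemma map_joint_dist_eq:
  "map_pmf F (joint_dist p q pu pw) =
   bind_pmf (xu_y_pmf p pu)
     (\<lambda>((x, u), y). bind_pmf (pw x u y) (\<lambda>w. map_pmf (\<lambda>z. F (x, y, z, u, w)) (q x)))"
  unfolding joint_dist_def xu_y_pmf_def map_bind_pmf bind_assoc_pmf bind_map_pmf
proof (rule bind_pmf_cong[OF refl], clarsimp simp: map_pmf_def bind_assoc_pmf bind_return_pmf)
  fix x y
  show "bind_pmf (q x) (\<lambda>z. bind_pmf (pu y) (\<lambda>u. bind_pmf (pw x u y) (\<lambda>w. return_pmf (F (x, y, z, u, w))))) =
        bind_pmf (pu y) (\<lambda>u. bind_pmf (pw x u y) (\<lambda>w. bind_pmf (q x) (\<lambda>z. return_pmf (F (x, y, z, u, w)))))"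
    by (subst bind_commute_pmf, rule bind_pmf_cong[OF refl], subst bind_commute_pmf) simp
qed

definition averaged_channel ::
  "('x \<times> 'y) pmf \<Rightarrow> ('y \<Rightarrow> nat pmf) \<Rightarrow> ('x \<Rightarrow> nat \<Rightarrow> 'y \<Rightarrow> nat pmf) \<Rightarrow> 'x \<Rightarrow> nat \<Rightarrow> nat pmf" where
  "averaged_channel p pu pw x u = averaged_kernel (xu_y_pmf p pu) (\<lambda>(x, u) y. pw x u y) 0 (x, u)"

lemma map_joint_dist_averaged_channel:
  "map_pmf (\<lambda>(x, y, z, u, w). G (x, z, u, w)) (joint_dist p q pu pw) =
   map_pmf (\<lambda>(x, y, z, u, w). G (x, z, u, w))
     (joint_dist p q pu (\<lambda>x u y. averaged_channel p pu pw x u))"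
  unfolding map_joint_dist_eq averaged_channel_def
  using bind_averaged_kernel[of "xu_y_pmf p pu" "\<lambda>(x, u) y. pw x u y"
      "\<lambda>(x, u) w. map_pmf (\<lambda>z. G (x, z, u, w)) (q x)" 0]
  by (simp add: case_prod_unfold)

lemma map_joint_dist_indep_channel:
  "map_pmf (\<lambda>(x, y, z, u, w). G (x, y, z, u)) (joint_dist p q pu pw) =
   map_pmf (\<lambda>(x, y, z, u, w). G (x, y, z, u)) (joint_dist p q pu pw')"
  unfolding map_joint_dist_eq by simp

lemma achieves_averaged_channel:
  fixes p :: "('x \<times> 'y) pmf" and q :: "'x \<Rightarrow> 'z pmf" and d :: "'x \<Rightarrow> 'xh \<Rightarrow> real"
  assumes "achieves p q d D pu pw xhat RR1"
  shows "achieves p q d D pu (\<lambda>x u y. averaged_channel p pu pw x u) xhat RR1"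
proof -
  let ?J = "joint_dist p q pu pw"
  let ?J' = "joint_dist p q pu (\<lambda>x u y. averaged_channel p pu pw x u)"
  have expectation_xzuw: "measure_pmf.expectation J (\<lambda>(x, y, z, u, w). d x (xhat u w z)) =
      measure_pmf.expectation (map_pmf (\<lambda>(x, y, z, u, w). (x, z, u, w)) J)
        (\<lambda>(x, z, u, w). d x (xhat u w z))"
    for J :: "('x \<times> 'y \<times> 'z \<times> nat \<times> nat) pmf"
    by (simp add: case_prod_unfold)
  have xzuw: "map_pmf (\<lambda>(x, y, z, u, w). (x, z, u, w)) ?J =
              map_pmf (\<lambda>(x, y, z, u, w). (x, z, u, w)) ?J'"
    using map_joint_dist_averaged_channel[of "\<lambda>t. t"] by simp
  have xwuz: "map_pmf (\<lambda>(x, y, z, u, w). (x, w, (u, z))) ?J =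
              map_pmf (\<lambda>(x, y, z, u, w). (x, w, (u, z))) ?J'"
    using map_joint_dist_averaged_channel[of "\<lambda>(x, z, u, w). (x, w, (u, z))"] by simp
  have uyz: "map_pmf (\<lambda>(x, y, z, u, w). (u, y, z)) ?J =
             map_pmf (\<lambda>(x, y, z, u, w). (u, y, z)) ?J'"
    using map_joint_dist_indep_channel[of "\<lambda>(x, y, z, u). (u, y, z)"] by simp
  have "finite (\<Union>x. \<Union>u. \<Union>y. set_pmf (pw x u y))"
    using assms unfolding achieves_def Let_def by blast
  then have "finite (insert 0 (\<Union>x. \<Union>u. \<Union>y. set_pmf (pw x u y)))" by simp
  moreover have "(\<Union>x. \<Union>u. \<Union>y::'y. set_pmf (averaged_channel p pu pw x u)) \<subseteq>
                 insert 0 (\<Union>x. \<Union>u. \<Union>y. set_pmf (pw x u y))"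
    using set_averaged_kernel_subset[of "xu_y_pmf p pu" "\<lambda>(x, u) y. pw x u y" 0]
    unfolding averaged_channel_def by fastforce
  ultimately have "finite (\<Union>x. \<Union>u. \<Union>y::'y. set_pmf (averaged_channel p pu pw x u))"
    by (rule finite_subset[rotated])
  with assms show ?thesis
    unfolding achieves_def Let_def
    by (simp only: expectation_xzuw[of ?J] expectation_xzuw[of ?J'] xzuw xwuz uyz)
qed

theorem lemma3:
  fixes p :: "('x::finite \<times> 'y::finite) pmf"
    and q :: "'x \<Rightarrow> 'z::finite pmf"
    and d :: "'x \<Rightarrow> 'xh::finite \<Rightarrow> real"
    and D :: real
  assumes "\<And>x xh. d x xh \<ge> 0"
  shows "region_bar p q d D = region_YXZ p q d D"
proof
  show "region_bar p q d D \<subseteq> region_YXZ p q d D"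
    unfolding region_bar_def region_YXZ_def by (blast dest: achieves_averaged_channel)
  show "region_YXZ p q d D \<subseteq> region_bar p q d D"
    unfolding region_YXZ_def region_bar_def by blast
qed

end
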